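(* Let $\xi \in \Phi_{\rm BYG}$. Then $m_{\rm crit} > 2 \delta_R$.
   Context: Parameters $\xi = (\tau_L, \delta_L, \tau_R, \delta_R)$ of the map $f_\xi(x,y) = (\tau_L x + y + 1, -\delta_L x)$ for $x \le 0$ and $(\tau_R x + y + 1, -\delta_R x)$ for $x \ge 0$. Let $\Phi = \{ \xi \mid \tau_L > \delta_L + 1, \delta_L > 0, \tau_R < -(\delta_R + 1), \delta_R > 0 \}$. Let $0 < \lambda_L^s < 1 < \lambda_L^u$ be the eigenvalues of $A_L = \begin{bmatrix} \tau_L & 1 \\ -\delta_L & 0 \end{bmatrix}$. Define $\phi(\xi) = \delta_R - \left( \tau_R + \delta_L + \delta_R - (1 + \tau_R) \lambda_L^u \right) \lambda_L^u$ and $\Phi_{\rm BYG} = \{ \xi \in \Phi \mid \phi(\xi) > 0 \}$. Define $m_{\rm crit} = \lambda_L^s + \frac{2 \tau_L}{(\lambda_L^u)^2 - 1}$. *)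

theory Defs
  imports Complex_Main
begin

definition Phi :: "(real \<times> real \<times> real \<times> real) set" where
  "Phi = {(tL, dL, tR, dR). tL > dL + 1 \<and> dL > 0 \<and> tR < -(dR + 1) \<and> dR > 0}"

(* Eigenvalues of A_L = [[tL,1],[-dL,0]]: roots of z^2 - tL z + dL = 0 *)
definition lamLu :: "real \<Rightarrow> real \<Rightarrow> real" where
  "lamLu tL dL = (tL + sqrt (tL^2 - 4*dL)) / 2"

definition lamLs :: "real \<Rightarrow> real \<Rightarrow> real" where
  "lamLs tL dL = (tL - sqrt (tL^2 - 4*dL)) / 2"

definition phi :: "real \<times> real \<times> real \<times> real \<Rightarrow> real" where
  "phi xi = (case xi of (tL, dL, tR, dR) \<Rightarrow>
      dR - (tR + dL + dR - (1 + tR) * lamLu tL dL) * lamLu tL dL)"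

definition Phi_BYG :: "(real \<times> real \<times> real \<times> real) set" where
  "Phi_BYG = {xi \<in> Phi. phi xi > 0}"

definition m_crit :: "real \<times> real \<times> real \<times> real \<Rightarrow> real" where
  "m_crit xi = (case xi of (tL, dL, tR, dR) \<Rightarrow>
      lamLs tL dL + 2 * tL / ((lamLu tL dL)^2 - 1))"

end

theory Submission
  imports Defs
begin

text \<open>By Vieta, \<open>\<lambda>\<^sup>u + \<lambda>\<^sup>s = \<tau>\<^sub>L\<close> and \<open>\<lambda>\<^sup>u \<lambda>\<^sup>s = \<delta>\<^sub>L\<close>, so \<open>\<phi>\<close> is a polynomial in the two
  eigenvalues. Estimating \<open>\<tau>\<^sub>R < -(\<delta>\<^sub>R + 1)\<close> inside \<open>\<phi> > 0\<close> yields
  \<open>\<delta>\<^sub>R ((\<lambda>\<^sup>u)\<^sup>2 - 1) < \<lambda>\<^sup>u (1 - \<lambda>\<^sup>s \<lambda>\<^sup>u)\<close>, and twice the right-hand side falls short of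
  \<open>\<lambda>\<^sup>s ((\<lambda>\<^sup>u)\<^sup>2 - 1) + 2 \<tau>\<^sub>L = m\<^sub>c\<^sub>r\<^sub>i\<^sub>t ((\<lambda>\<^sup>u)\<^sup>2 - 1)\<close> by exactly \<open>\<lambda>\<^sup>s (3 (\<lambda>\<^sup>u)\<^sup>2 + 1) \<ge> 0\<close>.\<close>

lemma lamLu_plus_lamLs: "lamLu tL dL + lamLs tL dL = tL"
  by (simp add: lamLu_def lamLs_def field_simps)

lemma lamLu_times_lamLs:
  assumes "4 * dL \<le> tL\<^sup>2"
  shows "lamLu tL dL * lamLs tL dL = dL"
proof -
  have "sqrt (tL\<^sup>2 - 4 * dL) ^ 2 = tL\<^sup>2 - 4 * dL"
    using assms by simp
  then show ?thesis
    by (simp add: lamLu_def lamLs_def field_simps power2_eq_square)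
qed

lemma lamLs_less_lamLu:
  assumes "4 * dL < tL\<^sup>2"
  shows "lamLs tL dL < lamLu tL dL"
  using assms by (simp add: lamLu_def lamLs_def)

lemma discriminant_pos:
  fixes tL dL :: real
  assumes "tL > dL + 1" and "dL > 0"
  shows "4 * dL < tL\<^sup>2"
proof -
  have "(dL + 1)\<^sup>2 < tL\<^sup>2"
    using assms by (simp add: power_strict_mono)
  moreover have "4 * dL \<le> (dL + 1)\<^sup>2"
    using zero_le_power2[of "dL - 1"] by (simp add: power2_eq_square algebra_simps)
  ultimately show ?thesis
    by linarith
qed

lemma saddle_eigenvalues:
  assumes "tL > dL + 1" and "dL > 0"
  shows "0 < lamLs tL dL" and "lamLs tL dL < 1" and "1 < lamLu tL dL"
proof -
  define u s where "u = lamLu tL dL" and "s = lamLs tL dL"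
  have disc: "4 * dL < tL\<^sup>2"
    using assms by (rule discriminant_pos)
  have sum: "u + s = tL" and prod: "u * s = dL" and "s < u"
    using lamLu_plus_lamLs lamLu_times_lamLs lamLs_less_lamLu disc
    unfolding u_def s_def by auto
  have "u > 0"
    using sum \<open>s < u\<close> assms by linarith
  then show "0 < s"
    using prod assms(2) zero_less_mult_pos by blast
  \<comment> \<open>the characteristic polynomial is negative at 1, which separates the roots\<close>
  have "(1 - u) * (1 - s) < 0"
    using sum prod assms(1) by (simp add: algebra_simps)
  then show "s < 1" and "1 < u"
    using \<open>s < u\<close> by (auto simp: mult_less_0_iff)
qed

lemma phi_pos_imp_bound:
  fixes u s tR dR :: real
  assumes "1 < u" and "tR < -(dR + 1)"
    and "dR - (tR + s * u + dR - (1 + tR) * u) * u > 0"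
  shows "dR * (u\<^sup>2 - 1) < u * (1 - s * u)"
proof -
  have "tR * (u * (u - 1)) \<le> -(dR + 1) * (u * (u - 1))"
    using assms(1,2) by (intro mult_right_mono) auto
  then show ?thesis
    using assms(3) by (simp add: algebra_simps power2_eq_square)
qed

lemma bound_imp_two_dR_less:
  fixes u s dR :: real
  assumes "1 < u" and "0 \<le> s" and "dR * (u\<^sup>2 - 1) < u * (1 - s * u)"
  shows "2 * dR < s + 2 * (u + s) / (u\<^sup>2 - 1)"
proof -
  have "s * (u\<^sup>2 - 1) + 2 * (u + s) - 2 * u * (1 - s * u) = s * (3 * u\<^sup>2 + 1)"
    by (simp add: algebra_simps power2_eq_square)
  moreover have "0 \<le> s * (3 * u\<^sup>2 + 1)"
    using assms(2) by simp
  ultimately have "2 * dR * (u\<^sup>2 - 1) < s * (u\<^sup>2 - 1) + 2 * (u + s)"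
    using assms(3) by linarith
  moreover have "0 < u\<^sup>2 - 1"
    using assms(1) by (simp add: one_less_power)
  ultimately show ?thesis
    by (simp add: field_simps)
qed

theorem lemma4p4:
  fixes tL dL tR dR :: real
  assumes "(tL, dL, tR, dR) \<in> Phi_BYG"
  shows "m_crit (tL, dL, tR, dR) > 2 * dR"
proof -
  define u s where "u = lamLu tL dL" and "s = lamLs tL dL"
  have "tL > dL + 1" "dL > 0" "tR < -(dR + 1)"
    and phi_pos: "dR - (tR + dL + dR - (1 + tR) * u) * u > 0"
    using assms by (auto simp: Phi_BYG_def Phi_def phi_def u_def s_def)
  then have "0 < s" "1 < u"
    using saddle_eigenvalues unfolding u_def s_def by auto
  have "4 * dL \<le> tL\<^sup>2"
    using discriminant_pos[OF \<open>tL > dL + 1\<close> \<open>dL > 0\<close>] by simp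
  then have "s * u = dL" "u + s = tL"
    using lamLu_times_lamLs lamLu_plus_lamLs unfolding u_def s_def by (auto simp: mult.commute)
  then have "dR * (u\<^sup>2 - 1) < u * (1 - s * u)"
    using phi_pos \<open>1 < u\<close> \<open>tR < -(dR + 1)\<close> phi_pos_imp_bound by metis
  then have "2 * dR < s + 2 * (u + s) / (u\<^sup>2 - 1)"
    using bound_imp_two_dR_less \<open>1 < u\<close> \<open>0 < s\<close> by simp
  then show ?thesis
    unfolding \<open>u + s = tL\<close> by (simp add: m_crit_def u_def s_def)
qed

end
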